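(* Let $\gamma\in(0,1)$ be a discount factor, $H\ge 1$ a planning horizon, $f$ the true (stochastic) transition map and $f_\phi$ an approximate transition map such that for every state–action pair $(x,u)$ the total variation distance between $f(\cdot\mid x,u)$ and $f_\phi(\cdot\mid x,u)$ is at most $\epsilon_f$. For a state $x_t$ and a control-distribution parameter $\tilde\eta_t$, let $$J(x_t,\tilde\eta_t)=\mathbb{E}_{\mathbf{u}_t\sim\pi_{\tilde\eta_t},\,\mathbf{x}_t\sim f_\phi}\big[C(\mathbf{x}_t,\mathbf{u}_t)\big],\qquad J_r(x_t,\tilde\eta_t)=\mathbb{E}_{\mathbf{u}_t\sim\pi_{\tilde\eta_t},\,\mathbf{x}_t\sim f}\big[C(\mathbf{x}_t,\mathbf{u}_t)\big],$$ where $C(\mathbf{x}_t,\mathbf{u}_t)=\sum_{h=0}^{H-1}\gamma^h c(x_{t,h},u_{t,h})+\gamma^H c_H(x_{t,H})$ with $c=-r$ and terminal cost $c_H(x)=-V_\zeta(x)$. Suppose $|c|\le c_{max}$ and $|V_\zeta|\le V_{max}$. Then $$J(x_t,\tilde\eta_t)-J_r(x_t,\tilde\eta_t)\le 2c_{max}\frac{(H-1)\gamma^{H+1}-H\gamma^H+\gamma}{(1-\gamma)^2}\,\epsilon_f+2\gamma^H V_{max}H\epsilon_f=:R_{f,H}.$$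
   Context: Setting: a Markov decision process with state set $\mathcal{X}\subset\mathbb{R}^n$, action set $\mathcal{U}\subset\mathbb{R}^m$, reward $r:\mathcal{X}\times\mathcal{U}\to\mathbb{R}$. An $H$-step rollout from $x_t$ consists of states $\mathbf{x}_t=(x_{t,0},\dots,x_{t,H})$ with $x_{t,0}=x_t$ and controls $\mathbf{u}_t=(u_{t,0},\dots,u_{t,H-1})$, where $\mathbf{u}_t$ is sampled from a control distribution $\pi_{\tilde\eta_t}$ (parameterized by $\tilde\eta_t=(\tilde\eta_{t,0},\dots,\tilde\eta_{t,H-1})$) and $x_{t,h+1}\sim f_\phi(x_{t,h},u_{t,h})$ (for $J$) or $x_{t,h+1}\sim f(x_{t,h},u_{t,h})$ (for $J_r$). $V_\zeta$ is a value-function estimate used as terminal reward. $c_{max}$ bounds the stage cost and $V_{max}$ bounds the value function. *)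

theory Defs
  imports "HOL-Probability.Probability"
begin

definition tv_dist :: "'a measure \<Rightarrow> 'a measure \<Rightarrow> real" where
  "tv_dist M N = (SUP A \<in> sets M. \<bar>measure M A - measure N A\<bar>)"

text \<open>Expected discounted cost-to-go of an H-step rollout under a fixed control
  sequence u and transition kernel f, with n steps remaining (current step
  index H - n), stage cost c = -r and terminal cost c_H = -V.\<close>
primrec cost_to_go ::
  "real \<Rightarrow> nat \<Rightarrow> ('x \<Rightarrow> 'u \<Rightarrow> 'x measure) \<Rightarrow> ('x \<Rightarrow> 'u \<Rightarrow> real) \<Rightarrow> ('x \<Rightarrow> real)
     \<Rightarrow> (nat \<Rightarrow> 'u) \<Rightarrow> nat \<Rightarrow> 'x \<Rightarrow> real" where
  "cost_to_go \<gamma> H f r V u 0 x = \<gamma> ^ H * (- V x)"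
| "cost_to_go \<gamma> H f r V u (Suc n) x =
     \<gamma> ^ (H - Suc n) * (- r x (u (H - Suc n)))
     + (\<integral>y. cost_to_go \<gamma> H f r V u n y \<partial>(f x (u (H - Suc n))))"

definition exp_cost ::
  "real \<Rightarrow> nat \<Rightarrow> ('x \<Rightarrow> 'u \<Rightarrow> 'x measure) \<Rightarrow> ('x \<Rightarrow> 'u \<Rightarrow> real) \<Rightarrow> ('x \<Rightarrow> real)
     \<Rightarrow> ('p \<Rightarrow> (nat \<Rightarrow> 'u) measure) \<Rightarrow> 'x \<Rightarrow> 'p \<Rightarrow> real" where
  "exp_cost \<gamma> H f r V ctrl x eta = (\<integral>u. cost_to_go \<gamma> H f r V u H x \<partial>(ctrl eta))"

end

theory Submission
  imports Defs
begin

text \<open>With n steps to go the cost-to-go is bounded in absolute value by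
  cost_bound n = c_max (sum of the remaining stage discounts) + gamma^H V_max. One backward step
  changes the gap between the model and the true cost-to-go by the averaged gap of the
  continuations plus the effect of swapping the transition kernel under a function with values
  in [-cost_bound n, cost_bound n]; by the Hahn decomposition the latter is at most
  2 cost_bound n eps_f. Summing over the horizon and evaluating the resulting double geometric
  sum gives the bound.\<close>

lemma integral_measurable_subprob_algebra2:
  fixes f :: "'a \<Rightarrow> 'b \<Rightarrow> 'c::{banach, second_countable_topology}"
  assumes f[measurable]: "(\<lambda>(x, y). f x y) \<in> borel_measurable (M \<Otimes>\<^sub>M N)"
    and L[measurable]: "L \<in> M \<rightarrow>\<^sub>M subprob_algebra N"
  shows "(\<lambda>x. integral\<^sup>L (L x) (f x)) \<in> borel_measurable M"
proof -
  note integral_measurable_subprob_algebra[measurable] measurable_distr2[measurable]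
  have "(\<lambda>x. integral\<^sup>L (distr (L x) (M \<Otimes>\<^sub>M N) (\<lambda>y. (x, y))) (\<lambda>(x, y). f x y)) \<in> borel_measurable M"
    by measurable
  then show ?thesis
    by (rule measurable_cong[THEN iffD1, rotated])
       (simp add: integral_distr measurable_Pair2' cong: measurable_cong_sets)
qed

lemma integral_mono_measure_nonneg:
  fixes f :: "'a \<Rightarrow> real"
  assumes sets: "sets A = sets B" and le: "A \<le> B" and f: "integrable B f"
    and nonneg: "\<And>x. x \<in> space B \<Longrightarrow> 0 \<le> f x"
  shows "integral\<^sup>L A f \<le> integral\<^sup>L B f"
proof -
  have space: "space A = space B"
    using sets by (rule sets_eq_imp_space_eq)
  have B: "(\<integral>\<^sup>+ x. f x \<partial>B) = ennreal (integral\<^sup>L B f)"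
    using f nonneg by (intro nn_integral_eq_integral AE_I2) auto
  have "integral\<^sup>L A f = enn2real (\<integral>\<^sup>+ x. f x \<partial>A)"
    using f sets nonneg space by (intro integral_eq_nn_integral AE_I2) (auto cong: measurable_cong_sets)
  also have "\<dots> \<le> enn2real (\<integral>\<^sup>+ x. f x \<partial>B)"
    using nn_integral_mono_measure[OF sets le, of "\<lambda>x. ennreal (f x)"] B by (intro enn2real_mono) auto
  also have "\<dots> = integral\<^sup>L B f"
    using B nonneg by (simp add: integral_nonneg)
  finally show ?thesis .
qed

lemma set_integral_mono_measure:
  fixes f :: "'a \<Rightarrow> real"
  assumes sets: "sets Q = sets P" and S: "S \<in> sets P"
    and le: "\<And>X. X \<in> sets P \<Longrightarrow> X \<subseteq> S \<Longrightarrow> emeasure Q X \<le> emeasure P X"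
    and f: "integrable P f" and nonneg: "\<And>x. x \<in> space P \<Longrightarrow> 0 \<le> f x"
  shows "(LINT x:S|Q. f x) \<le> (LINT x:S|P. f x)"
proof -
  have restrict: "(LINT x:S|R. f x) = integral\<^sup>L (density R (indicator S)) f"
    if "sets R = sets P" for R
  proof -
    have "f \<in> borel_measurable R" "S \<in> sets R"
      using f S that by (auto cong: measurable_cong_sets)
    then show ?thesis
      using integral_density[of f R "indicator S"] by (simp add: set_lebesgue_integral_def ennreal_indicator)
  qed
  show ?thesis
    unfolding restrict[OF sets] restrict[OF refl]
  proof (rule integral_mono_measure_nonneg)
    show "density Q (indicator S) \<le> density P (indicator S)"
      using le S sets by (subst le_measure) (auto simp: emeasure_restricted)
    show "integrable (density P (indicator S)) f"
      using integrable_density[of f P "indicator S"] integrable_mult_indicator[OF S f] f S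
      by (simp add: ennreal_indicator)
  qed (use sets nonneg in auto)
qed

lemma integrable_bounded_sets_eq:
  fixes h :: "'a \<Rightarrow> real"
  assumes R: "finite_measure R" and sets: "sets R = sets M"
    and h: "h \<in> borel_measurable M" and bound: "\<And>x. x \<in> space M \<Longrightarrow> \<bar>h x\<bar> \<le> B"
  shows "integrable R h"
  using sets_eq_imp_space_eq[OF sets] h sets bound
  by (intro finite_measure.integrable_const_bound[OF R, where B=B] AE_I2) (auto cong: measurable_cong_sets)

lemma (in prob_space) abs_integral_le_bound:
  fixes h :: "'a \<Rightarrow> real"
  assumes h: "integrable M h" and bound: "\<And>x. x \<in> space M \<Longrightarrow> \<bar>h x\<bar> \<le> B"
  shows "\<bar>\<integral>x. h x \<partial>M\<bar> \<le> B"
proof -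
  have "(\<integral>x. \<bar>h x\<bar> \<partial>M) \<le> B"
    using bound by (intro integral_le_const[OF integrable_abs[OF h]] AE_I2) auto
  then show ?thesis
    using integral_abs_bound[of M h] by linarith
qed

lemma (in finite_measure) integral_split_by_bounds:
  fixes g :: "'a \<Rightarrow> real"
  assumes g: "integrable M g" and Y: "Y \<in> sets M"
  shows "(\<integral>x. g x \<partial>M) = b * measure M Y + a * measure M (space M - Y)
    - (LINT x:Y|M. b - g x) + (LINT x:space M - Y|M. g x - a)"
proof -
  define Z where "Z = space M - Y"
  have Z: "Z \<in> sets M"
    using Y by (auto simp: Z_def)
  have "(\<integral>x. g x \<partial>M) = (\<integral>x. b * indicator Y x + a * indicator Z x
      - indicator Y x *\<^sub>R (b - g x) + indicator Z x *\<^sub>R (g x - a) \<partial>M)"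
    by (intro Bochner_Integration.integral_cong) (auto simp: Z_def indicator_def)
  also have "\<dots> = b * measure M Y + a * measure M Z
      - (LINT x:Y|M. b - g x) + (LINT x:Z|M. g x - a)"
  proof -
    have "integrable M (\<lambda>x. indicator S x * h x)" if "S \<in> sets M" "integrable M h" for S and h :: "'a \<Rightarrow> real"
      using integrable_mult_indicator[OF that] by simp
    moreover have "integrable M (\<lambda>x. c * indicator S x)" if "S \<in> sets M" for S and c :: real
      using that by (simp add: less_top[symmetric])
    ultimately show ?thesis
      using Y Z g unfolding set_lebesgue_integral_def by (simp add: integral_add integral_diff)
  qed
  finally show ?thesis
    unfolding Z_def .
qed

lemma tv_dist_commute: "sets M = sets N \<Longrightarrow> tv_dist M N = tv_dist N M"
  unfolding tv_dist_def by (simp add: abs_minus_commute)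

lemma abs_measure_diff_le_tv_dist:
  assumes P: "prob_space P" and Q: "prob_space Q" and A: "A \<in> sets P"
  shows "\<bar>measure P A - measure Q A\<bar> \<le> tv_dist P Q"
  unfolding tv_dist_def
proof (rule cSUP_upper[OF A])
  have "\<bar>measure P X - measure Q X\<bar> \<le> 1" for X
    using prob_space.prob_le_1[OF P, of X] prob_space.prob_le_1[OF Q, of X]
      measure_nonneg[of P X] measure_nonneg[of Q X]
    unfolding abs_le_iff by linarith
  then show "bdd_above ((\<lambda>X. \<bar>measure P X - measure Q X\<bar>) ` sets P)"
    by (intro bdd_aboveI2)
qed

text \<open>The Hahn decomposition splits the space into a part Y where P dominates Q and its
  complement where Q dominates P; pushing g up to b on Y and down to a off Y only increases
  the difference of the integrals.\<close>
lemma integral_diff_le_tv_dist: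
  fixes g :: "'a \<Rightarrow> real"
  assumes P: "prob_space P" and Q: "prob_space Q" and sets: "sets Q = sets P"
    and g: "g \<in> borel_measurable P" and bounds: "\<And>x. x \<in> space P \<Longrightarrow> a \<le> g x \<and> g x \<le> b"
  shows "(\<integral>x. g x \<partial>P) - (\<integral>x. g x \<partial>Q) \<le> (b - a) * tv_dist P Q"
proof -
  interpret P: prob_space P by fact
  interpret Q: prob_space Q by fact
  have space: "space Q = space P"
    using sets by (rule sets_eq_imp_space_eq)
  obtain Y where Y: "Y \<in> sets P"
    and Q_le_P: "\<And>X. X \<in> sets P \<Longrightarrow> X \<subseteq> Y \<Longrightarrow> emeasure Q X \<le> emeasure P X"
    and P_le_Q: "\<And>X. X \<in> sets P \<Longrightarrow> X \<inter> Y = {} \<Longrightarrow> emeasure P X \<le> emeasure Q X"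
    using finite_unsigned_Hahn_decomposition[OF P.finite_measure_axioms Q.finite_measure_axioms sets]
    by blast
  define Z where "Z = space P - Y"
  have Z: "Z \<in> sets P"
    using Y by (auto simp: Z_def)
  have bound: "\<bar>g x\<bar> \<le> 2 * (\<bar>a\<bar> + \<bar>b\<bar>) \<and> \<bar>b - g x\<bar> \<le> 2 * (\<bar>a\<bar> + \<bar>b\<bar>) \<and> \<bar>g x - a\<bar> \<le> 2 * (\<bar>a\<bar> + \<bar>b\<bar>)"
    if "x \<in> space P" for x
    using bounds[OF that] by (auto simp: abs_if)
  have integrable: "integrable R h" if "R \<in> {P, Q}" "h \<in> {g, \<lambda>x. b - g x, \<lambda>x. g x - a}" for R h
    using that P.finite_measure_axioms Q.finite_measure_axioms sets g bound
    by (auto intro!: integrable_bounded_sets_eq[where M=P and B="2 * (\<bar>a\<bar> + \<bar>b\<bar>)"])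
  have upper: "(LINT x:Y|Q. b - g x) \<le> (LINT x:Y|P. b - g x)"
    using sets Y Q_le_P integrable bounds by (intro set_integral_mono_measure) auto
  have lower: "(LINT x:Z|P. g x - a) \<le> (LINT x:Z|Q. g x - a)"
    using sets Z integrable bounds space
    by (intro set_integral_mono_measure) (auto simp: Z_def intro: P_le_Q)
  have "a \<le> b"
    using bounds P.not_empty by fastforce
  have split_P: "(\<integral>x. g x \<partial>P) = b * measure P Y + a * (1 - measure P Y)
      - (LINT x:Y|P. b - g x) + (LINT x:Z|P. g x - a)"
    using P.integral_split_by_bounds[OF integrable[of P g] Y] P.prob_compl[OF Y] by (simp add: Z_def)
  have split_Q: "(\<integral>x. g x \<partial>Q) = b * measure Q Y + a * (1 - measure Q Y)
      - (LINT x:Y|Q. b - g x) + (LINT x:Z|Q. g x - a)"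
    using Q.integral_split_by_bounds[OF integrable[of Q g], of Y] Q.prob_compl[of Y] Y sets space
    by (simp add: Z_def)
  have "(\<integral>x. g x \<partial>P) - (\<integral>x. g x \<partial>Q) \<le> (b - a) * (measure P Y - measure Q Y)"
    unfolding split_P split_Q using upper lower by (simp add: algebra_simps)
  also have "\<dots> \<le> (b - a) * tv_dist P Q"
    using abs_measure_diff_le_tv_dist[OF P Q Y] \<open>a \<le> b\<close> by (intro mult_left_mono) auto
  finally show ?thesis .
qed

lemma integral_diff_le_tv_dist_abs:
  fixes g :: "'a \<Rightarrow> real"
  assumes P: "prob_space P" and Q: "prob_space Q" and sets_P: "sets P = sets M" and sets_Q: "sets Q = sets M"
    and g: "g \<in> borel_measurable M" and bound: "\<And>x. x \<in> space M \<Longrightarrow> \<bar>g x\<bar> \<le> c"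
  shows "(\<integral>x. g x \<partial>P) - (\<integral>x. g x \<partial>Q) \<le> 2 * c * tv_dist P Q"
proof -
  have "(\<integral>x. g x \<partial>P) - (\<integral>x. g x \<partial>Q) \<le> (c - - c) * tv_dist P Q"
    using g bound sets_P sets_Q sets_eq_imp_space_eq[OF sets_P]
    by (intro integral_diff_le_tv_dist[OF P Q]) (force simp: abs_le_iff cong: measurable_cong_sets)+
  then show ?thesis
    by simp
qed

lemma sum_power_horizon:
  fixes \<gamma> :: real
  assumes "\<gamma> \<noteq> 1" and "m \<le> H"
  shows "(\<Sum>i<m. \<gamma> ^ (H - Suc i)) = (\<gamma> ^ (H - m) - \<gamma> ^ H) / (1 - \<gamma>)"
  using assms(2)
proof (induction m)
  case 0
  then show ?case
    by simp
next
  case (Suc m)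
  then have "H - m = Suc (H - Suc m)"
    by simp
  with Suc assms(1) show ?case
    by (simp add: field_simps)
qed

lemma sum_sum_power_horizon:
  fixes \<gamma> :: real
  assumes "\<gamma> \<noteq> 1"
  shows "(\<Sum>m<H. \<Sum>i<m. \<gamma> ^ (H - Suc i))
    = ((real H - 1) * \<gamma> ^ (H + 1) - real H * \<gamma> ^ H + \<gamma>) / (1 - \<gamma>)\<^sup>2"
proof -
  have "(\<Sum>m<H. \<Sum>i<m. \<gamma> ^ (H - Suc i)) = (\<Sum>m<H. (\<gamma> ^ (H - m) - \<gamma> ^ H) / (1 - \<gamma>))"
    using sum_power_horizon[OF assms] by (intro sum.cong) auto
  also have "\<dots> = ((\<Sum>m<H. \<gamma> ^ Suc (H - Suc m)) - real H * \<gamma> ^ H) / (1 - \<gamma>)"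
    by (simp add: sum_divide_distrib[symmetric] sum_subtractf Suc_diff_Suc)
  also have "(\<Sum>m<H. \<gamma> ^ Suc (H - Suc m)) = (\<Sum>m<H. \<gamma> ^ Suc m)"
    by (rule sum.nat_diff_reindex)
  also have "\<dots> = \<gamma> * (1 - \<gamma> ^ H) / (1 - \<gamma>)"
    using assms by (simp add: sum_distrib_left[symmetric] sum_gp_strict)
  finally show ?thesis
    using assms by (simp add: field_simps power2_eq_square)
qed

lemma kernel_prob_space:
  assumes F: "case_prod F \<in> M \<Otimes>\<^sub>M N \<rightarrow>\<^sub>M prob_algebra K" and "x \<in> space M" "u \<in> space N"
  shows "prob_space (F x u)" and "sets (F x u) = sets K"
  using measurable_space[OF F, of "(x, u)"] assms by (auto simp: space_pair_measure space_prob_algebra)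

locale bounded_rollout =
  fixes MX :: "'x measure" and MU :: "'u measure"
    and r :: "'x \<Rightarrow> 'u \<Rightarrow> real" and V :: "'x \<Rightarrow> real"
    and \<gamma> :: real and H :: nat and c\<^sub>m\<^sub>a\<^sub>x V\<^sub>m\<^sub>a\<^sub>x :: real
  assumes horizon_pos: "H \<ge> 1"
    and discount_nonneg: "0 \<le> \<gamma>"
    and reward_measurable: "case_prod r \<in> borel_measurable (MX \<Otimes>\<^sub>M MU)"
    and value_measurable[measurable]: "V \<in> borel_measurable MX"
    and stage_cost_bounded: "\<And>x u. x \<in> space MX \<Longrightarrow> u \<in> space MU \<Longrightarrow> \<bar>- r x u\<bar> \<le> c\<^sub>m\<^sub>a\<^sub>x"
    and terminal_cost_bounded: "\<And>x. x \<in> space MX \<Longrightarrow> \<bar>V x\<bar> \<le> V\<^sub>m\<^sub>a\<^sub>x"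
begin

abbreviation rollouts :: "(nat \<Rightarrow> 'u) measure" where
  "rollouts \<equiv> PiM {..<H} (\<lambda>_. MU)"

lemma control_in_space: "u \<in> space rollouts \<Longrightarrow> u (H - Suc n) \<in> space MU"
  using horizon_pos by (auto simp: space_PiM PiE_iff)

lemma borel_measurable_cost_to_go:
  assumes F: "case_prod F \<in> MX \<Otimes>\<^sub>M MU \<rightarrow>\<^sub>M prob_algebra MX"
  shows "(\<lambda>(x, u). cost_to_go \<gamma> H F r V u n x) \<in> borel_measurable (MX \<Otimes>\<^sub>M rollouts)"
proof (induction n)
  case 0
  show ?case
    by (simp add: split_beta')
next
  case (Suc n)
  define k where "k = H - Suc n"
  have "k \<in> {..<H}"
    using horizon_pos by (auto simp: k_def)
  then have control: "(\<lambda>(x, u). (x, u k)) \<in> MX \<Otimes>\<^sub>M rollouts \<rightarrow>\<^sub>M MX \<Otimes>\<^sub>M MU"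
    by measurable
  have swap: "(\<lambda>(p, y). (y, snd p)) \<in> (MX \<Otimes>\<^sub>M rollouts) \<Otimes>\<^sub>M MX \<rightarrow>\<^sub>M MX \<Otimes>\<^sub>M rollouts"
    by measurable
  have "(\<lambda>(p, y). cost_to_go \<gamma> H F r V (snd p) n y) \<in> borel_measurable ((MX \<Otimes>\<^sub>M rollouts) \<Otimes>\<^sub>M MX)"
    using measurable_compose[OF swap Suc.IH] by (simp add: split_beta')
  moreover have "(\<lambda>p. F (fst p) (snd p k)) \<in> MX \<Otimes>\<^sub>M rollouts \<rightarrow>\<^sub>M subprob_algebra MX"
    using measurable_prob_algebraD[OF measurable_compose[OF control F]] by (simp add: split_beta')
  ultimately have "(\<lambda>p. \<integral>y. cost_to_go \<gamma> H F r V (snd p) n y \<partial>F (fst p) (snd p k))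
      \<in> borel_measurable (MX \<Otimes>\<^sub>M rollouts)"
    by (rule integral_measurable_subprob_algebra2)
  moreover have "(\<lambda>p. r (fst p) (snd p k)) \<in> borel_measurable (MX \<Otimes>\<^sub>M rollouts)"
    using measurable_compose[OF control reward_measurable] by (simp add: split_beta')
  ultimately show ?case
    by (simp add: split_beta' k_def[symmetric])
qed

lemma borel_measurable_cost_to_go_state:
  assumes "case_prod F \<in> MX \<Otimes>\<^sub>M MU \<rightarrow>\<^sub>M prob_algebra MX" and "u \<in> space rollouts"
  shows "(\<lambda>x. cost_to_go \<gamma> H F r V u n x) \<in> borel_measurable MX"
  using measurable_compose[OF measurable_Pair2'[OF assms(2)] borel_measurable_cost_to_go[OF assms(1)]]
  by simp

definition cost_bound :: "nat \<Rightarrow> real" where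
  "cost_bound n = c\<^sub>m\<^sub>a\<^sub>x * (\<Sum>i<n. \<gamma> ^ (H - Suc i)) + \<gamma> ^ H * V\<^sub>m\<^sub>a\<^sub>x"

lemma abs_cost_to_go_le:
  assumes F: "case_prod F \<in> MX \<Otimes>\<^sub>M MU \<rightarrow>\<^sub>M prob_algebra MX"
    and u: "u \<in> space rollouts" and x: "x \<in> space MX"
  shows "\<bar>cost_to_go \<gamma> H F r V u n x\<bar> \<le> cost_bound n"
  using x
proof (induction n arbitrary: x)
  case 0
  then show ?case
    using terminal_cost_bounded discount_nonneg by (simp add: cost_bound_def abs_mult mult_left_mono)
next
  case (Suc n)
  define k where "k = H - Suc n"
  have uk: "u k \<in> space MU"
    using control_in_space[OF u] by (simp add: k_def)
  note kernel = kernel_prob_space[OF F Suc.prems uk]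
  have "integrable (F x (u k)) (\<lambda>y. cost_to_go \<gamma> H F r V u n y)"
    using Suc.IH by (intro integrable_bounded_sets_eq[OF prob_space.finite_measure[OF kernel(1)] kernel(2)]
        borel_measurable_cost_to_go_state[OF F u])
  then have "\<bar>\<integral>y. cost_to_go \<gamma> H F r V u n y \<partial>F x (u k)\<bar> \<le> cost_bound n"
    using Suc.IH sets_eq_imp_space_eq[OF kernel(2)] by (intro prob_space.abs_integral_le_bound[OF kernel(1)]) auto
  moreover have "\<bar>\<gamma> ^ k * (- r x (u k))\<bar> \<le> \<gamma> ^ k * c\<^sub>m\<^sub>a\<^sub>x"
    using stage_cost_bounded[OF Suc.prems uk] discount_nonneg by (simp add: abs_mult mult_left_mono)
  moreover have "cost_bound (Suc n) = \<gamma> ^ k * c\<^sub>m\<^sub>a\<^sub>x + cost_bound n"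
    by (simp add: cost_bound_def k_def algebra_simps)
  moreover have "cost_to_go \<gamma> H F r V u (Suc n) x
      = \<gamma> ^ k * (- r x (u k)) + (\<integral>y. cost_to_go \<gamma> H F r V u n y \<partial>F x (u k))"
    by (simp add: k_def)
  ultimately show ?case
    using abs_triangle_ineq[of "\<gamma> ^ k * (- r x (u k))" "\<integral>y. cost_to_go \<gamma> H F r V u n y \<partial>F x (u k)"]
    by linarith
qed

lemma cost_to_go_diff_le:
  assumes F: "case_prod F \<in> MX \<Otimes>\<^sub>M MU \<rightarrow>\<^sub>M prob_algebra MX"
    and G: "case_prod G \<in> MX \<Otimes>\<^sub>M MU \<rightarrow>\<^sub>M prob_algebra MX"
    and tv: "\<And>x v. x \<in> space MX \<Longrightarrow> v \<in> space MU \<Longrightarrow> tv_dist (F x v) (G x v) \<le> \<epsilon>"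
    and u: "u \<in> space rollouts" and x: "x \<in> space MX"
  shows "cost_to_go \<gamma> H G r V u n x - cost_to_go \<gamma> H F r V u n x \<le> 2 * \<epsilon> * (\<Sum>m<n. cost_bound m)"
  using x
proof (induction n arbitrary: x)
  case 0
  then show ?case
    by simp
next
  case (Suc n)
  define k where "k = H - Suc n"
  have uk: "u k \<in> space MU"
    using control_in_space[OF u] by (simp add: k_def)
  note F_kernel = kernel_prob_space[OF F Suc.prems uk]
  note G_kernel = kernel_prob_space[OF G Suc.prems uk]
  have space: "space (G x (u k)) = space MX"
    using G_kernel(2) by (rule sets_eq_imp_space_eq)
  have bounded: "\<bar>cost_to_go \<gamma> H K r V u n y\<bar> \<le> cost_bound n"
    if "K \<in> {F, G}" "y \<in> space MX" for K y
    using that abs_cost_to_go_le[OF F u] abs_cost_to_go_le[OF G u] by auto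
  have integrable: "integrable (G x (u k)) (\<lambda>y. cost_to_go \<gamma> H K r V u n y)" if "K \<in> {F, G}" for K
    using that bounded borel_measurable_cost_to_go_state[OF F u] borel_measurable_cost_to_go_state[OF G u]
    by (intro integrable_bounded_sets_eq[OF prob_space.finite_measure[OF G_kernel(1)] G_kernel(2)]) auto
  have "(\<integral>y. cost_to_go \<gamma> H G r V u n y - cost_to_go \<gamma> H F r V u n y \<partial>G x (u k))
      \<le> 2 * \<epsilon> * (\<Sum>m<n. cost_bound m)"
    using Suc.IH integrable space
    by (intro prob_space.integral_le_const[OF G_kernel(1)] AE_I2) auto
  moreover have "(\<integral>y. cost_to_go \<gamma> H F r V u n y \<partial>G x (u k)) - (\<integral>y. cost_to_go \<gamma> H F r V u n y \<partial>F x (u k))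
      \<le> 2 * cost_bound n * tv_dist (G x (u k)) (F x (u k))"
    using bounded[of F] by (intro integral_diff_le_tv_dist_abs[OF G_kernel(1) F_kernel(1) G_kernel(2) F_kernel(2)
        borel_measurable_cost_to_go_state[OF F u]]) auto
  moreover have "2 * cost_bound n * tv_dist (G x (u k)) (F x (u k)) \<le> 2 * cost_bound n * \<epsilon>"
    using tv[OF Suc.prems uk] tv_dist_commute[OF G_kernel(2)[folded F_kernel(2)]]
      bounded[of F, OF _ Suc.prems]
    by (simp add: mult_left_mono)
  moreover have "cost_to_go \<gamma> H G r V u (Suc n) x - cost_to_go \<gamma> H F r V u (Suc n) x
      = (\<integral>y. cost_to_go \<gamma> H G r V u n y - cost_to_go \<gamma> H F r V u n y \<partial>G x (u k))
        + ((\<integral>y. cost_to_go \<gamma> H F r V u n y \<partial>G x (u k)) - (\<integral>y. cost_to_go \<gamma> H F r V u n y \<partial>F x (u k)))"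
    using integrable by (simp add: k_def)
  ultimately show ?case
    by (simp add: algebra_simps)
qed

lemma exp_cost_diff_le:
  assumes F: "case_prod F \<in> MX \<Otimes>\<^sub>M MU \<rightarrow>\<^sub>M prob_algebra MX"
    and G: "case_prod G \<in> MX \<Otimes>\<^sub>M MU \<rightarrow>\<^sub>M prob_algebra MX"
    and tv: "\<And>x v. x \<in> space MX \<Longrightarrow> v \<in> space MU \<Longrightarrow> tv_dist (F x v) (G x v) \<le> \<epsilon>"
    and ctrl: "prob_space (ctrl \<eta>)" and ctrl_sets: "sets (ctrl \<eta>) = sets rollouts"
    and x: "x \<in> space MX"
  shows "exp_cost \<gamma> H G r V ctrl x \<eta> - exp_cost \<gamma> H F r V ctrl x \<eta> \<le> 2 * \<epsilon> * (\<Sum>m<H. cost_bound m)"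
proof -
  interpret prob_space "ctrl \<eta>" by fact
  have space: "space (ctrl \<eta>) = space rollouts"
    using ctrl_sets by (rule sets_eq_imp_space_eq)
  have integrable: "integrable (ctrl \<eta>) (\<lambda>u. cost_to_go \<gamma> H K r V u H x)" if "K \<in> {F, G}" for K
  proof (rule integrable_bounded_sets_eq[OF finite_measure ctrl_sets])
    show "(\<lambda>u. cost_to_go \<gamma> H K r V u H x) \<in> borel_measurable rollouts"
      using that measurable_compose[OF measurable_Pair1'[OF x] borel_measurable_cost_to_go[OF F]]
        measurable_compose[OF measurable_Pair1'[OF x] borel_measurable_cost_to_go[OF G]] by auto
    show "\<bar>cost_to_go \<gamma> H K r V u H x\<bar> \<le> cost_bound H" if "u \<in> space rollouts" for u
      using \<open>K \<in> {F, G}\<close> abs_cost_to_go_le[OF F that x] abs_cost_to_go_le[OF G that x] by auto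
  qed
  have "exp_cost \<gamma> H G r V ctrl x \<eta> - exp_cost \<gamma> H F r V ctrl x \<eta>
      = (\<integral>u. cost_to_go \<gamma> H G r V u H x - cost_to_go \<gamma> H F r V u H x \<partial>ctrl \<eta>)"
    using integrable unfolding exp_cost_def by simp
  also have "\<dots> \<le> 2 * \<epsilon> * (\<Sum>m<H. cost_bound m)"
    using integrable cost_to_go_diff_le[OF F G tv _ x] space
    by (intro integral_le_const AE_I2) auto
  finally show ?thesis .
qed

lemma sum_cost_bound:
  assumes "\<gamma> \<noteq> 1"
  shows "(\<Sum>m<H. cost_bound m)
    = c\<^sub>m\<^sub>a\<^sub>x * (((real H - 1) * \<gamma> ^ (H + 1) - real H * \<gamma> ^ H + \<gamma>) / (1 - \<gamma>)\<^sup>2) + real H * \<gamma> ^ H * V\<^sub>m\<^sub>a\<^sub>x"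
  using sum_sum_power_horizon[OF assms, of H]
  by (simp add: cost_bound_def sum.distrib sum_distrib_left[symmetric])

end

theorem lemma1:
  fixes MX :: "'x measure" and MU :: "'u measure"
    and f f\<^sub>\<phi> :: "'x \<Rightarrow> 'u \<Rightarrow> 'x measure"
    and r :: "'x \<Rightarrow> 'u \<Rightarrow> real" and V :: "'x \<Rightarrow> real"
    and ctrl :: "'p \<Rightarrow> (nat \<Rightarrow> 'u) measure"
    and \<gamma> \<epsilon>\<^sub>f c\<^sub>m\<^sub>a\<^sub>x V\<^sub>m\<^sub>a\<^sub>x :: real and H :: nat
    and x\<^sub>t :: 'x and \<eta> :: 'p
  assumes "0 < \<gamma>" and "\<gamma> < 1" and "H \<ge> 1"
    and "case_prod f \<in> MX \<Otimes>\<^sub>M MU \<rightarrow>\<^sub>M prob_algebra MX"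
    and "case_prod f\<^sub>\<phi> \<in> MX \<Otimes>\<^sub>M MU \<rightarrow>\<^sub>M prob_algebra MX"
    and "\<And>x u. x \<in> space MX \<Longrightarrow> u \<in> space MU \<Longrightarrow> tv_dist (f x u) (f\<^sub>\<phi> x u) \<le> \<epsilon>\<^sub>f"
    and "case_prod r \<in> borel_measurable (MX \<Otimes>\<^sub>M MU)"
    and "V \<in> borel_measurable MX"
    and "\<And>x u. x \<in> space MX \<Longrightarrow> u \<in> space MU \<Longrightarrow> \<bar>- r x u\<bar> \<le> c\<^sub>m\<^sub>a\<^sub>x"
    and "\<And>x. x \<in> space MX \<Longrightarrow> \<bar>V x\<bar> \<le> V\<^sub>m\<^sub>a\<^sub>x"
    and "prob_space (ctrl \<eta>)"
    and "sets (ctrl \<eta>) = sets (PiM {..<H} (\<lambda>_. MU))"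
    and "x\<^sub>t \<in> space MX"
  shows "exp_cost \<gamma> H f\<^sub>\<phi> r V ctrl x\<^sub>t \<eta> - exp_cost \<gamma> H f r V ctrl x\<^sub>t \<eta>
    \<le> 2 * c\<^sub>m\<^sub>a\<^sub>x * (((real H - 1) * \<gamma> ^ (H + 1) - real H * \<gamma> ^ H + \<gamma>) / (1 - \<gamma>)\<^sup>2) * \<epsilon>\<^sub>f
       + 2 * \<gamma> ^ H * V\<^sub>m\<^sub>a\<^sub>x * real H * \<epsilon>\<^sub>f"
proof -
  interpret bounded_rollout MX MU r V \<gamma> H c\<^sub>m\<^sub>a\<^sub>x V\<^sub>m\<^sub>a\<^sub>x
    using assms by unfold_locales auto
  have "exp_cost \<gamma> H f\<^sub>\<phi> r V ctrl x\<^sub>t \<eta> - exp_cost \<gamma> H f r V ctrl x\<^sub>t \<eta> \<le> 2 * \<epsilon>\<^sub>f * (\<Sum>m<H. cost_bound m)"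
    using assms(4-6,11-13) by (rule exp_cost_diff_le)
  also have "\<dots> = 2 * c\<^sub>m\<^sub>a\<^sub>x * (((real H - 1) * \<gamma> ^ (H + 1) - real H * \<gamma> ^ H + \<gamma>) / (1 - \<gamma>)\<^sup>2) * \<epsilon>\<^sub>f
       + 2 * \<gamma> ^ H * V\<^sub>m\<^sub>a\<^sub>x * real H * \<epsilon>\<^sub>f"
    using assms(2) by (simp add: sum_cost_bound algebra_simps)
  finally show ?thesis .
qed

end
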